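(* Let $j\ge1$ and $s\ge j$ be integers, write $s=qj+r$ with integers $q\ge1$ and $0\le r<j$, and let $\alpha=\sum_{i=0}^{q-1}(r+ij+1)$. Then for every positive integer $n$, \[ g_{j,s,1}(n)=g_{j,r,1}(n+\alpha)-qj, \] where $g_{j,s,1}$ and $g_{j,r,1}$ are the sequences defined in the context.
   Context: Fix integers $j\ge1$, $\lambda\ge1$, $s\ge0$. Define a labeled infinite rooted tree $\mathcal K$ as follows. It has "supernodes" $S_0,S_1,S_2,\dots$ with an edge between $S_i$ and $S_{i+1}$ for every $i\ge0$ ($S_0$ is the root). $S_0$ has two further children: the "initial leaf" and a node $N_0$, which is a leaf. For each $i\ge1$, $S_i$ has a child $N_i$ (the "knot node"), and attached to $N_i$ are $\lambda$ chains, each a path of $i\cdot j$ nodes hanging from $N_i$; the last (bottom) node of each chain is a leaf. Each supernode carries $s$ labels and every other node carries exactly one label. The labels are the consecutive positive integers $1,2,3,\dots$, assigned in the following order: initial leaf, $S_0$, $N_0$; then for $i=1,2,3,\dots$: $S_i$ (its $s$ labels), $N_i$, then the nodes of the first chain of $N_i$ from top to bottom, then the second chain, ..., then the $\lambda$-th chain. The initial leaf has weight $1$; every other leaf of $\mathcal K$ (namely $N_0$ and the bottom node of each chain) has weight $j$. The leaf weight sequence $w(n)=w_{j,s,\lambda}(n)$ ($n\ge1$) is the total weight of the leaves of $\mathcal K$ whose label is $\le n$. Explicitly, $w(n)=1+j\cdot\#\{\ell\in L:\ell\le n\}$, where $L$ consists of the number $s+2$ together with the numbers $L_{i,c}=s+2+\sum_{l=1}^{i-1}(s+1+\lambda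 l j)+s+1+c\,i\,j$ for $i\ge1$, $1\le c\le\lambda$. The sequence $g_{j,s,\lambda}$ is defined by $g_{j,s,\lambda}(n)=w_{j,s,\lambda}(n)$ for $1\le n\le 3+2s+\lambda j$ and $g_{j,s,\lambda}(n)=g_{j,s,\lambda}(n-s-g_{j,s,\lambda}(n-j))+\lambda j$ for $n>3+2s+\lambda j$ (this is well defined). The same definitions are applied with $s$ replaced by $r$ to obtain $g_{j,r,1}$. *)

theory Defs
  imports Main
begin

definition Lic :: "nat \<Rightarrow> nat \<Rightarrow> nat \<Rightarrow> nat \<Rightarrow> nat \<Rightarrow> nat" where
  "Lic j s lam i c = s + 2 + (\<Sum>l=1..<i. s + 1 + lam * l * j) + s + 1 + c * i * j"

definition Lset :: "nat \<Rightarrow> nat \<Rightarrow> nat \<Rightarrow> nat set" where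
  "Lset j s lam = {s + 2} \<union> {Lic j s lam i c | i c. 1 \<le> i \<and> 1 \<le> c \<and> c \<le> lam}"

definition wseq :: "nat \<Rightarrow> nat \<Rightarrow> nat \<Rightarrow> nat \<Rightarrow> nat" where
  "wseq j s lam n = 1 + j * card {l \<in> Lset j s lam. l \<le> n}"

text \<open>One step of the recursion: given the list xs = [g(1),...,g(m-1)], compute g(m),
  where m = length xs + 1. Out-of-range recursive calls (which do not occur, since the
  recursion is well defined) are given the arbitrary value 0.\<close>
definition gstep :: "nat \<Rightarrow> nat \<Rightarrow> nat \<Rightarrow> nat list \<Rightarrow> nat" where
  "gstep j s lam xs =
     (let m = length xs + 1 in
      if m \<le> 3 + 2 * s + lam * j then wseq j s lam m
      else (let a = m - j in
            if 1 \<le> a \<and> a < m then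
              (let t = m - s - xs ! (a - 1) in
               if 1 \<le> t \<and> t < m then xs ! (t - 1) + lam * j else 0)
            else 0))"

primrec glist :: "nat \<Rightarrow> nat \<Rightarrow> nat \<Rightarrow> nat \<Rightarrow> nat list" where
  "glist j s lam 0 = []"
| "glist j s lam (Suc n) = glist j s lam n @ [gstep j s lam (glist j s lam n)]"

definition gseq :: "nat \<Rightarrow> nat \<Rightarrow> nat \<Rightarrow> nat \<Rightarrow> nat" where
  "gseq j s lam n = glist j s lam n ! (n - 1)"

end

theory Submission
  imports Defs
begin

(* For lambda = 1 the weight-j leaves of the tree K sit at the labels
     leaf_label j s i = s + 2 + sum_{l=1..i} (s + 1 + l*j)      (i = 0, 1, 2, ...),
   so w_{j,s,1}(n) = 1 + j * leaf_count j s n, where leaf_count counts the leaf labels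
   <= n.  We first show that the defining recursion of g_{j,s,1} is satisfied by w_{j,s,1}
   itself: the consecutive gaps of leaf labels grow by exactly j, which makes
   n - s - w(n - j) fall exactly one leaf behind n.  Hence g_{j,s,1} = w_{j,s,1}.
   Second, when s = q*j + r, the leaf labels for s are those for r shifted by
   alpha = sum_{i<q} (r + i*j + 1), with the first q leaves for r all at labels <= alpha + 1;
   so leaf_count j r (n + alpha) = q + leaf_count j s n for n >= 1.  The theorem is the
   combination of these two facts. *)

lemma length_glist [simp]: "length (glist j s lam n) = n"
  by (induction n) auto

lemma gseq_Suc: "gseq j s lam (Suc m) = gstep j s lam (glist j s lam m)"
  by (simp add: gseq_def nth_append)

lemma glist_nth: "m < n \<Longrightarrow> glist j s lam n ! m = gseq j s lam (Suc m)"
proof (induction n)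
  case 0
  then show ?case by simp
next
  case (Suc n)
  then show ?case
    by (cases "m < n") (auto simp: nth_append gseq_def less_Suc_eq)
qed

lemma gseq_initial:
  assumes "1 \<le> n" and "n \<le> 3 + 2 * s + lam * j"
  shows "gseq j s lam n = wseq j s lam n"
proof -
  obtain m where "n = Suc m" using assms(1) by (cases n) auto
  then show ?thesis using assms(2) by (simp add: gseq_Suc gstep_def)
qed

lemma gseq_recursion:
  assumes n: "3 + 2 * s + lam * j < n" and j: "0 < j" "j < n"
    and t: "0 < gseq j s lam (n - j)" "s + gseq j s lam (n - j) < n"
  shows "gseq j s lam n = gseq j s lam (n - s - gseq j s lam (n - j)) + lam * j"
proof -
  define m where "m = n - 1"
  have m: "Suc m = n" using j unfolding m_def by simp
  have prev: "glist j s lam m ! (i - 1) = gseq j s lam i" if "1 \<le> i" "i < n" for i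
    using glist_nth[of "i - 1" m] that m by simp
  have a: "glist j s lam m ! (n - j - 1) = gseq j s lam (n - j)"
    using prev[of "n - j"] j by simp
  have b: "glist j s lam m ! (n - s - gseq j s lam (n - j) - 1)
           = gseq j s lam (n - s - gseq j s lam (n - j))"
    using prev[of "n - s - gseq j s lam (n - j)"] t by simp
  have "gseq j s lam n = gstep j s lam (glist j s lam m)"
    using gseq_Suc[of j s lam m] m by simp
  also have "\<dots> = gseq j s lam (n - s - gseq j s lam (n - j)) + lam * j"
    using n j t a b m unfolding gstep_def Let_def by (simp add: Suc_le_eq)
  finally show ?thesis .
qed

section \<open>Leaf labels and leaf counts for \<open>\<lambda> = 1\<close>\<close>

definition leaf_label :: "nat \<Rightarrow> nat \<Rightarrow> nat \<Rightarrow> nat" where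
  "leaf_label j s i = s + 2 + (\<Sum>l\<in>{1..i}. s + 1 + l * j)"

text \<open>The number of weight-\<open>j\<close> leaves with label at most \<open>n\<close>.\<close>
definition leaf_count :: "nat \<Rightarrow> nat \<Rightarrow> nat \<Rightarrow> nat" where
  "leaf_count j s n = (LEAST i. n < leaf_label j s i)"

lemma leaf_label_0 [simp]: "leaf_label j s 0 = s + 2"
  by (simp add: leaf_label_def)

text \<open>Consecutive leaves are separated by the supernode and the chain of the next level.\<close>
lemma leaf_label_Suc: "leaf_label j s (Suc i) = leaf_label j s i + (s + 1 + Suc i * j)"
  by (simp add: leaf_label_def)

lemma leaf_label_gt: "i < leaf_label j s i"
  by (induction i) (auto simp: leaf_label_Suc)

lemma leaf_label_ge: "s + 2 + i * j \<le> leaf_label j s i"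
  by (induction i) (auto simp: leaf_label_Suc)

lemma strict_mono_leaf_label: "strict_mono (leaf_label j s)"
  by (rule strict_mono_Suc_iff[THEN iffD2]) (simp add: leaf_label_Suc)

lemma leaf_label_le_iff [simp]: "leaf_label j s i \<le> leaf_label j s k \<longleftrightarrow> i \<le> k"
  using strict_mono_leaf_label by (rule strict_mono_less_eq)

lemma Lic_eq_leaf_label: "1 \<le> i \<Longrightarrow> Lic j s 1 i 1 = leaf_label j s i"
  by (cases i) (simp_all add: Lic_def leaf_label_Suc leaf_label_def atLeastLessThanSuc_atLeastAtMost)

lemma Lset_eq_range: "Lset j s 1 = range (leaf_label j s)"
proof -
  have "Lset j s 1 = insert (s + 2) ((\<lambda>i. Lic j s 1 i 1) ` {i. 1 \<le> i})"
    unfolding Lset_def by (auto simp: le_antisym)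
  also have "(\<lambda>i. Lic j s 1 i 1) ` {i. 1 \<le> i} = leaf_label j s ` {i. 1 \<le> i}"
    using Lic_eq_leaf_label by (intro image_cong) auto
  also have "insert (s + 2) (leaf_label j s ` {i. 1 \<le> i}) = leaf_label j s ` UNIV"
  proof -
    have "UNIV = insert 0 {i::nat. 1 \<le> i}" by auto
    then show ?thesis by (metis image_insert leaf_label_0)
  qed
  finally show ?thesis .
qed

lemma leaf_count_iff: "leaf_label j s i \<le> n \<longleftrightarrow> i < leaf_count j s n"
proof
  assume le: "leaf_label j s i \<le> n"
  have "n < leaf_label j s (leaf_count j s n)"
    unfolding leaf_count_def by (rule LeastI[of _ n]) (rule leaf_label_gt)
  then show "i < leaf_count j s n"
    using le leaf_label_le_iff[of j s "leaf_count j s n" i] by linarith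
next
  assume "i < leaf_count j s n"
  then show "leaf_label j s i \<le> n"
    unfolding leaf_count_def using not_less_Least by force
qed

lemma wseq_leaf_count: "wseq j s 1 n = 1 + j * leaf_count j s n"
proof -
  have "{l \<in> Lset j s 1. l \<le> n} = leaf_label j s ` {..<leaf_count j s n}"
    unfolding Lset_eq_range by (auto simp: leaf_count_iff)
  moreover have "inj (leaf_label j s)"
    using strict_mono_leaf_label strict_mono_imp_inj_on by blast
  ultimately show ?thesis
    by (simp add: wseq_def card_image inj_on_subset)
qed

lemma leaf_count_eqI:
  assumes "\<And>i. i < k \<Longrightarrow> leaf_label j s i \<le> n" and "n < leaf_label j s k"
  shows "leaf_count j s n = k"
proof -
  have "\<not> leaf_count j s n < k"
    using assms(1) leaf_count_iff[of j s "leaf_count j s n" n] by auto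
  moreover have "\<not> k < leaf_count j s n"
    using assms(2) leaf_count_iff[of j s k n] by simp
  ultimately show ?thesis by simp
qed

lemma leaf_count_between:
  assumes "leaf_label j s p \<le> n" and "n < leaf_label j s (Suc p)"
  shows "leaf_count j s n = Suc p"
proof (rule leaf_count_eqI)
  fix i assume "i < Suc p"
  then have "leaf_label j s i \<le> leaf_label j s p" by simp
  then show "leaf_label j s i \<le> n" using assms(1) by linarith
qed (rule assms(2))

lemma leaf_count_below_first: "n < s + 2 \<Longrightarrow> leaf_count j s n = 0"
  by (rule leaf_count_eqI) auto

section \<open>The counting recurrence\<close>

text \<open>The heart of the argument: if \<open>n - j\<close> lies after exactly \<open>p + 1\<close> leaves, then
  stepping back from \<open>n\<close> by \<open>s + 1 + j(p + 1)\<close> passes exactly one leaf.  This holds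
  because the gap after leaf \<open>p\<close> is \<open>s + 1 + (p + 1) j\<close> and gaps grow by \<open>j\<close>.\<close>
lemma leaf_count_step_back:
  assumes j: "1 \<le> j" and big: "3 + 2 * s + j < n"
    and lo: "leaf_label j s p \<le> n - j" and hi: "n - j < leaf_label j s (Suc p)"
  shows "leaf_count j s (n - (s + 1 + j * Suc p)) + 1 = leaf_count j s n"
proof -
  define t where "t = n - (s + 1 + j * Suc p)"
  have gap: "leaf_label j s (Suc p) = leaf_label j s p + (s + 1 + j * Suc p)"
    by (simp add: leaf_label_Suc)
  have fits: "s + 1 + j * Suc p < n"
    using lo leaf_label_ge[of s p j] big by (simp add: algebra_simps)
  have "j \<le> j * Suc p" by simp
  show ?thesis
  proof (cases "leaf_label j s (Suc p) \<le> n")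
    case True
    have "n < leaf_label j s (Suc (Suc p))"
      using hi j leaf_label_Suc[of j s "Suc p"] by simp
    then have "leaf_count j s n = Suc (Suc p)"
      using True by (rule leaf_count_between[rotated])
    moreover have "leaf_count j s t = Suc p"
      using True hi gap lo fits \<open>j \<le> j * Suc p\<close> unfolding t_def
      by (intro leaf_count_between) linarith+
    ultimately show ?thesis unfolding t_def by simp
  next
    case False
    then have count_n: "leaf_count j s n = Suc p"
      using lo leaf_count_between[of j s p n] by linarith
    have t_below: "t < leaf_label j s p"
      using False gap fits unfolding t_def by linarith
    show ?thesis
    proof (cases p)
      case 0
      then show ?thesis
        using t_below count_n leaf_count_below_first unfolding t_def by simp
    next
      case (Suc p')
      have "leaf_label j s p = leaf_label j s p' + (s + 1 + j * p)"
        using Suc by (simp add: leaf_label_Suc)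
      then have "leaf_label j s p' \<le> t"
        using lo fits big Suc unfolding t_def by (simp add: algebra_simps)
      then have "leaf_count j s t = p"
        using t_below Suc leaf_count_between[of j s p' t] by simp
      then show ?thesis using count_n unfolding t_def by simp
    qed
  qed
qed

lemma wseq_recursion:
  assumes j: "1 \<le> j" and big: "3 + 2 * s + j < n"
  shows "s + wseq j s 1 (n - j) < n"
    and "wseq j s 1 n = wseq j s 1 (n - s - wseq j s 1 (n - j)) + j"
proof -
  have "leaf_label j s 0 \<le> n - j" using big by simp
  then have "0 < leaf_count j s (n - j)" using leaf_count_iff by blast
  then obtain p where p: "leaf_count j s (n - j) = Suc p"
    using not0_implies_Suc by blast
  have lo: "leaf_label j s p \<le> n - j" and hi: "n - j < leaf_label j s (Suc p)"
    using leaf_count_iff[of j s p "n - j"] leaf_count_iff[of j s "Suc p" "n - j"] p by simp_all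
  have w: "wseq j s 1 (n - j) = 1 + j * Suc p"
    using p wseq_leaf_count[of j s "n - j"] by simp
  show "s + wseq j s 1 (n - j) < n"
    using w lo leaf_label_ge[of s p j] big by (simp add: algebra_simps)
  define t where "t = n - (s + 1 + j * Suc p)"
  have step: "leaf_count j s n = leaf_count j s t + 1"
    using leaf_count_step_back[OF j big lo hi] unfolding t_def by simp
  have "n - s - wseq j s 1 (n - j) = t"
    using w unfolding t_def by simp
  then show "wseq j s 1 n = wseq j s 1 (n - s - wseq j s 1 (n - j)) + j"
    unfolding wseq_leaf_count step by simp
qed

lemma gseq_eq_wseq:
  assumes j: "1 \<le> j"
  shows "1 \<le> n \<Longrightarrow> gseq j s 1 n = wseq j s 1 n"
proof (induction n rule: less_induct)
  case (less n)
  show ?case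
  proof (cases "n \<le> 3 + 2 * s + j")
    case True
    then show ?thesis using gseq_initial[OF less.prems] by simp
  next
    case False
    then have big: "3 + 2 * s + j < n" by simp
    have prev: "gseq j s 1 (n - j) = wseq j s 1 (n - j)"
      using less.IH big j by simp
    note fits = wseq_recursion(1)[OF j big]
    have w_pos: "0 < wseq j s 1 (n - j)" by (simp add: wseq_def)
    have "gseq j s 1 n = gseq j s 1 (n - s - gseq j s 1 (n - j)) + j"
      using gseq_recursion[of s 1 j n] big j fits prev w_pos by simp
    also have "\<dots> = wseq j s 1 (n - s - wseq j s 1 (n - j)) + j"
      using prev less.IH[of "n - s - wseq j s 1 (n - j)"] fits w_pos by simp
    also have "\<dots> = wseq j s 1 n"
      using wseq_recursion(2)[OF j big] by simp
    finally show ?thesis .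
  qed
qed

section \<open>Shifting the offset \<open>s\<close> by multiples of \<open>j\<close>\<close>

lemma leaf_label_closed: "leaf_label j r q = r + 2 + (\<Sum>i<q. r + i * j + 1) + q * j"
  by (induction q) (simp_all add: leaf_label_Suc)

lemma leaf_label_shift:
  assumes "s = q * j + r"
  shows "leaf_label j r (q + k) = leaf_label j s k + (\<Sum>i<q. r + i * j + 1)"
proof (induction k)
  case 0
  then show ?case using assms by (simp add: leaf_label_closed)
next
  case (Suc k)
  then show ?case using assms by (simp add: leaf_label_Suc algebra_simps)
qed

lemma leaf_count_shift:
  assumes s: "s = q * j + r" and q: "1 \<le> q" and n: "1 \<le> n"
  shows "leaf_count j r (n + (\<Sum>i<q. r + i * j + 1)) = q + leaf_count j s n"
proof (rule leaf_count_eqI)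
  fix i assume i: "i < q + leaf_count j s n"
  show "leaf_label j r i \<le> n + (\<Sum>i<q. r + i * j + 1)"
  proof (cases "i < q")
    case True
    obtain q' where q': "q = Suc q'" using q by (cases q) auto
    have "leaf_label j r q' + (r + 1 + q * j) = s + 2 + (\<Sum>i<q. r + i * j + 1)"
      using leaf_label_Suc[of j r q'] leaf_label_shift[OF s, of 0] q' by simp
    then have "leaf_label j r q' = (\<Sum>i<q. r + i * j + 1) + 1"
      using s by simp
    moreover have "leaf_label j r i \<le> leaf_label j r q'"
      using True q' by simp
    ultimately show ?thesis using n by simp
  next
    case False
    then obtain k where k: "i = q + k" and "k < leaf_count j s n"
      using i by (metis add_less_cancel_left le_add_diff_inverse not_less)
    then have "leaf_label j s k \<le> n" using leaf_count_iff by blast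
    then show ?thesis using leaf_label_shift[OF s, of k] k by simp
  qed
next
  show "n + (\<Sum>i<q. r + i * j + 1) < leaf_label j r (q + leaf_count j s n)"
    using leaf_count_iff[of j s "leaf_count j s n" n] leaf_label_shift[OF s] by simp
qed

theorem theorem4p3:
  fixes j s q r n :: nat
  assumes "j \<ge> 1" and "s \<ge> j"
    and "s = q * j + r" and "q \<ge> 1" and "r < j"
    and "n \<ge> 1"
  shows "int (gseq j s 1 n)
         = int (gseq j r 1 (n + (\<Sum>i<q. r + i * j + 1))) - int (q * j)"
proof -
  define \<alpha> where "\<alpha> = (\<Sum>i<q. r + i * j + 1)"
  have "1 \<le> n + \<alpha>" using assms(6) by simp
  have "gseq j s 1 n = 1 + j * leaf_count j s n"
    unfolding gseq_eq_wseq[OF assms(1) assms(6)] wseq_leaf_count ..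
  moreover have "gseq j r 1 (n + \<alpha>) = 1 + j * leaf_count j r (n + \<alpha>)"
    unfolding gseq_eq_wseq[OF assms(1) \<open>1 \<le> n + \<alpha>\<close>] wseq_leaf_count ..
  moreover have "leaf_count j r (n + \<alpha>) = q + leaf_count j s n"
    unfolding \<alpha>_def using leaf_count_shift assms(3,4,6) by blast
  ultimately show ?thesis
    unfolding \<alpha>_def[symmetric] by (simp add: algebra_simps)
qed

end
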